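(* Let $0\le\theta\le1$. (i) If $0\le\theta\le1/3$, then for every $\epsilon>0$ there exists a weighted digraph $D$ with $w(D)>0$ and $\theta(D)=\theta$ such that $\mathrm{mac}(D)<(1+\epsilon)\,l(\theta)\,w(D)$. (ii) If $1/3<\theta\le1$, then there exists a weighted digraph $D$ with $w(D)>0$ and $\theta(D)=\theta$ such that $\mathrm{mac}(D)=\theta\cdot w(D)$ $(=l(\theta)w(D))$.
   Context: A weighted digraph $D=(V,A,w)$ is a digraph without loops or parallel arcs (opposite arcs allowed) with weights $w:A\to\mathbb{R}_{\ge0}$; $w(D)$ is the total arc weight. For a partition $(X,Y)$ of $V$, $w(X,Y)$ is the total weight of arcs from $X$ to $Y$, and $\mathrm{mac}(D)=\max_{(X,Y)}w(X,Y)$. For $v\in V$, $r(v)=w^+(v)-w^-(v)$ (total weight leaving minus total weight entering $v$); $r^+(D)=\sum_{r(x)>0}r(x)$; $\theta(D)=r^+(D)/w(D)$. For $0\le\theta\le1$, $l(\theta)=\frac14+\frac{\theta^2}{4(1-2\theta)}$ if $\theta<1/3$ and $l(\theta)=\theta$ if $\theta\ge1/3$. *)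

theory Defs
  imports Complex_Main
begin

text \<open>A weighted digraph on vertex set V (finite, vertices drawn from nat): weights
 w u v \<ge> 0 for ordered pairs of distinct vertices of V (an arc of weight 0 is the same as
 no arc; opposite arcs allowed, no loops, no parallel arcs).\<close>

definition weighted_digraph :: "nat set \<Rightarrow> (nat \<Rightarrow> nat \<Rightarrow> real) \<Rightarrow> bool" where
  "weighted_digraph V w \<longleftrightarrow> finite V \<and>
     (\<forall>u v. (u \<in> V \<and> v \<in> V \<and> u \<noteq> v \<longrightarrow> w u v \<ge> 0) \<and>
            (\<not> (u \<in> V \<and> v \<in> V \<and> u \<noteq> v) \<longrightarrow> w u v = 0))"

definition arcs :: "nat set \<Rightarrow> (nat \<times> nat) set" where
  "arcs V = {(u, v). u \<in> V \<and> v \<in> V \<and> u \<noteq> v}"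

definition total_weight :: "nat set \<Rightarrow> (nat \<Rightarrow> nat \<Rightarrow> real) \<Rightarrow> real" where
  "total_weight V w = (\<Sum>(u, v)\<in>arcs V. w u v)"

definition cut_weight :: "nat set \<Rightarrow> (nat \<Rightarrow> nat \<Rightarrow> real) \<Rightarrow> nat set \<Rightarrow> real" where
  "cut_weight V w X = (\<Sum>u\<in>X. \<Sum>v\<in>V - X. w u v)"

definition mac :: "nat set \<Rightarrow> (nat \<Rightarrow> nat \<Rightarrow> real) \<Rightarrow> real" where
  "mac V w = Max ((\<lambda>X. cut_weight V w X) ` Pow V)"

definition outw :: "nat set \<Rightarrow> (nat \<Rightarrow> nat \<Rightarrow> real) \<Rightarrow> nat \<Rightarrow> real" where
  "outw V w x = (\<Sum>y\<in>V - {x}. w x y)"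

definition inw :: "nat set \<Rightarrow> (nat \<Rightarrow> nat \<Rightarrow> real) \<Rightarrow> nat \<Rightarrow> real" where
  "inw V w x = (\<Sum>y\<in>V - {x}. w y x)"

definition rdiff :: "nat set \<Rightarrow> (nat \<Rightarrow> nat \<Rightarrow> real) \<Rightarrow> nat \<Rightarrow> real" where
  "rdiff V w x = outw V w x - inw V w x"

definition rplus :: "nat set \<Rightarrow> (nat \<Rightarrow> nat \<Rightarrow> real) \<Rightarrow> real" where
  "rplus V w = (\<Sum>x\<in>{x\<in>V. rdiff V w x > 0}. rdiff V w x)"

definition theta :: "nat set \<Rightarrow> (nat \<Rightarrow> nat \<Rightarrow> real) \<Rightarrow> real" where
  "theta V w = rplus V w / total_weight V w"

definition lfun :: "real \<Rightarrow> real" where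
  "lfun t = (if t < 1/3 then 1/4 + t^2 / (4 * (1 - 2*t)) else t)"

end

theory Submission
  imports Defs
begin

text \<open>The extremal digraphs consist of two complete symmetric digraphs of weight \<open>\<alpha>\<close> on
  \<open>X = {..<n}\<close> and \<open>Y = {n..<2n}\<close>, together with all arcs from \<open>X\<close> to \<open>Y\<close> of weight \<open>\<gamma>\<close>.
  Every vertex of \<open>X\<close> has \<open>r = \<gamma> n\<close> and every vertex of \<open>Y\<close> has \<open>r = -\<gamma> n\<close>, so \<open>\<theta>\<close> is
  controlled by the ratio \<open>\<gamma> / \<alpha>\<close>. A cut taking \<open>a\<close> vertices of \<open>X\<close> and \<open>b\<close> vertices of \<open>Y\<close>
  has weight \<open>\<alpha> a (n - a) + \<alpha> b (n - b) + \<gamma> a (n - b)\<close>, and maximising this quadratic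
  form over \<open>0 \<le> a, b \<le> n\<close> gives \<open>l(\<theta>) w(D)\<close> up to a factor \<open>n / (n - 1)\<close> when
  \<open>\<theta> \<le> 1/3\<close>, and exactly \<open>\<theta> w(D)\<close> (attained at \<open>a = n, b = 0\<close>) when \<open>\<theta> > 1/3\<close>.\<close>

lemma outw_eq_cut_weight: "outw V w x = cut_weight V w {x}"
  unfolding outw_def cut_weight_def by simp

lemma inw_eq_cut_weight:
  assumes "x \<in> V"
  shows "inw V w x = cut_weight V w (V - {x})"
proof -
  have "V - (V - {x}) = {x}" using assms by auto
  then show ?thesis unfolding inw_def cut_weight_def by simp
qed

lemma rdiff_eq_cut_weight:
  "x \<in> V \<Longrightarrow> rdiff V w x = cut_weight V w {x} - cut_weight V w (V - {x})"
  unfolding rdiff_def outw_eq_cut_weight inw_eq_cut_weight ..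

lemma total_weight_eq_sum_outw:
  assumes "finite V"
  shows "total_weight V w = (\<Sum>u\<in>V. outw V w u)"
proof -
  have "arcs V = Sigma V (\<lambda>u. V - {u})" unfolding arcs_def by auto
  then show ?thesis
    unfolding total_weight_def outw_def using assms by (simp add: sum.Sigma)
qed

lemma rplus_eq_sum_pos_part:
  assumes "finite V"
  shows "rplus V w = (\<Sum>x\<in>V. max 0 (rdiff V w x))"
proof -
  have "rplus V w = (\<Sum>x\<in>{x\<in>V. rdiff V w x > 0}. max 0 (rdiff V w x))"
    unfolding rplus_def by (rule sum.cong) auto
  also have "\<dots> = (\<Sum>x\<in>V. max 0 (rdiff V w x))"
    using assms by (intro sum.mono_neutral_left) auto
  finally show ?thesis .
qed

lemma cut_weight_le_mac:
  assumes "finite V" "X \<subseteq> V"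
  shows "cut_weight V w X \<le> mac V w"
  unfolding mac_def using assms by (intro Max_ge) auto

lemma mac_le:
  assumes "finite V" "\<And>X. X \<subseteq> V \<Longrightarrow> cut_weight V w X \<le> M"
  shows "mac V w \<le> M"
  unfolding mac_def using assms by (subst Max_le_iff) auto

definition two_cliques :: "nat \<Rightarrow> real \<Rightarrow> real \<Rightarrow> nat \<Rightarrow> nat \<Rightarrow> real" where
  "two_cliques n \<alpha> \<gamma> u v =
     (if u < 2*n \<and> v < 2*n \<and> u \<noteq> v then
        (if (u < n) = (v < n) then \<alpha> else if u < n then \<gamma> else 0)
      else 0)"

lemma weighted_digraph_two_cliques:
  "\<alpha> \<ge> 0 \<Longrightarrow> \<gamma> \<ge> 0 \<Longrightarrow> weighted_digraph {..<2*n} (two_cliques n \<alpha> \<gamma>)"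
  unfolding weighted_digraph_def two_cliques_def by auto

lemma card_Int_upper_half_le: "card (Z \<inter> {n..<2*n}) \<le> n"
  using card_mono[of "{n..<2*n}" "Z \<inter> {n..<2*n}"] by auto

lemma cut_weight_two_cliques:
  assumes Z: "Z \<subseteq> {..<2*n}"
  defines "a \<equiv> real (card (Z \<inter> {..<n}))" and "b \<equiv> real (card (Z \<inter> {n..<2*n}))"
  shows "cut_weight {..<2*n} (two_cliques n \<alpha> \<gamma>) Z =
           \<alpha> * (a * (n - a)) + \<alpha> * (b * (n - b)) + \<gamma> * (a * (n - b))"
proof -
  let ?X = "{..<n}" and ?Y = "{n..<2*n}" and ?w = "two_cliques n \<alpha> \<gamma>"
  have "finite Z" using Z finite_subset by blast
  have card_X: "real (card (?X - Z)) = n - a"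
    using card_Diff_subset_Int[of ?X Z] card_mono[of ?X "Z \<inter> ?X"]
    by (simp add: a_def Diff_Int2 Int_commute of_nat_diff)
  have card_Y: "real (card (?Y - Z)) = n - b"
    using card_Diff_subset_Int[of ?Y Z] card_Int_upper_half_le[of Z n]
    by (simp add: b_def Diff_Int2 Int_commute of_nat_diff)
  have split_out: "(\<Sum>v\<in>{..<2*n} - Z. ?w u v) = (\<Sum>v\<in>?X - Z. ?w u v) + (\<Sum>v\<in>?Y - Z. ?w u v)"
    for u by (subst sum.union_disjoint[symmetric]) (auto intro: sum.cong)
  have out_X: "(\<Sum>v\<in>{..<2*n} - Z. ?w u v) = \<alpha> * (n - a) + \<gamma> * (n - b)"
    if "u \<in> Z" "u < n" for u
  proof -
    have "(\<Sum>v\<in>?X - Z. ?w u v) = (\<Sum>v\<in>?X - Z. \<alpha>)"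
      "(\<Sum>v\<in>?Y - Z. ?w u v) = (\<Sum>v\<in>?Y - Z. \<gamma>)"
      using that by (intro sum.cong; auto simp: two_cliques_def)+
    then show ?thesis unfolding split_out using card_X card_Y by (simp add: mult.commute)
  qed
  have out_Y: "(\<Sum>v\<in>{..<2*n} - Z. ?w u v) = \<alpha> * (n - b)"
    if "u \<in> Z" "\<not> u < n" for u
  proof -
    have "(\<Sum>v\<in>?X - Z. ?w u v) = 0" "(\<Sum>v\<in>?Y - Z. ?w u v) = (\<Sum>v\<in>?Y - Z. \<alpha>)"
      using that Z by (intro sum.neutral sum.cong; auto simp: two_cliques_def)+
    then show ?thesis unfolding split_out using card_Y by (simp add: mult.commute)
  qed
  have "cut_weight {..<2*n} ?w Z =
          (\<Sum>u\<in>Z \<inter> ?X. \<Sum>v\<in>{..<2*n} - Z. ?w u v) + (\<Sum>u\<in>Z \<inter> ?Y. \<Sum>v\<in>{..<2*n} - Z. ?w u v)"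
  proof -
    have "cut_weight {..<2*n} ?w Z = (\<Sum>u\<in>Z \<inter> ?X \<union> Z \<inter> ?Y. \<Sum>v\<in>{..<2*n} - Z. ?w u v)"
      unfolding cut_weight_def using Z by (intro sum.cong) auto
    then show ?thesis using \<open>finite Z\<close> by (simp add: sum.union_disjoint disjoint_iff)
  qed
  also have "\<dots> = a * (\<alpha> * (n - a) + \<gamma> * (n - b)) + b * (\<alpha> * (n - b))"
    using out_X out_Y by (simp add: a_def b_def)
  finally show ?thesis by (simp add: algebra_simps)
qed

lemma cut_weight_two_cliques_singleton:
  assumes "x < 2*n"
  shows "cut_weight {..<2*n} (two_cliques n \<alpha> \<gamma>) {x} = \<alpha> * (real n - 1) + (if x < n then \<gamma> * n else 0)"
  using assms cut_weight_two_cliques[of "{x}" n \<alpha> \<gamma>]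
  by (cases "x < n") (auto simp: Int_absorb2)

lemma cut_weight_two_cliques_co_singleton:
  assumes "x < 2*n"
  shows "cut_weight {..<2*n} (two_cliques n \<alpha> \<gamma>) ({..<2*n} - {x}) =
           \<alpha> * (real n - 1) + (if x < n then 0 else \<gamma> * n)"
proof (cases "x < n")
  case True
  then have "({..<2*n} - {x}) \<inter> {..<n} = {..<n} - {x}" "({..<2*n} - {x}) \<inter> {n..<2*n} = {n..<2*n}"
    by auto
  with True show ?thesis
    using cut_weight_two_cliques[of "{..<2*n} - {x}" n \<alpha> \<gamma>] by (simp add: of_nat_diff)
next
  case False
  then have "({..<2*n} - {x}) \<inter> {..<n} = {..<n}" "({..<2*n} - {x}) \<inter> {n..<2*n} = {n..<2*n} - {x}"
    by auto
  with False assms show ?thesis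
    using cut_weight_two_cliques[of "{..<2*n} - {x}" n \<alpha> \<gamma>] by (simp add: of_nat_diff algebra_simps)
qed

lemma rdiff_two_cliques:
  "x < 2*n \<Longrightarrow> rdiff {..<2*n} (two_cliques n \<alpha> \<gamma>) x = (if x < n then \<gamma> * n else - \<gamma> * n)"
  by (simp add: rdiff_eq_cut_weight cut_weight_two_cliques_singleton cut_weight_two_cliques_co_singleton)

lemma total_weight_two_cliques:
  "total_weight {..<2*n} (two_cliques n \<alpha> \<gamma>) = 2 * real n * \<alpha> * (real n - 1) + \<gamma> * real n ^ 2"
proof -
  have "total_weight {..<2*n} (two_cliques n \<alpha> \<gamma>) =
          (\<Sum>x<2*n. \<alpha> * (real n - 1) + (if x < n then \<gamma> * n else 0))"
    by (simp add: total_weight_eq_sum_outw outw_eq_cut_weight cut_weight_two_cliques_singleton)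
  also have "\<dots> = 2 * real n * \<alpha> * (real n - 1) + \<gamma> * real n ^ 2"
    by (simp add: sum.distrib sum.If_cases lessThan_def[symmetric] Int_absorb1 power2_eq_square)
  finally show ?thesis .
qed

lemma rplus_two_cliques:
  assumes "\<gamma> \<ge> 0"
  shows "rplus {..<2*n} (two_cliques n \<alpha> \<gamma>) = \<gamma> * real n ^ 2"
proof -
  have "rplus {..<2*n} (two_cliques n \<alpha> \<gamma>) = (\<Sum>x<2*n. if x < n then \<gamma> * n else 0)"
    using assms by (simp add: rplus_eq_sum_pos_part rdiff_two_cliques) (intro sum.cong; simp)
  also have "\<dots> = \<gamma> * real n ^ 2"
    by (simp add: sum.If_cases lessThan_def[symmetric] Int_absorb1 power2_eq_square)
  finally show ?thesis .
qed

lemma mac_two_cliques_le: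
  fixes \<alpha> \<gamma> M :: real
  assumes "\<And>a b. 0 \<le> a \<Longrightarrow> a \<le> n \<Longrightarrow> 0 \<le> b \<Longrightarrow> b \<le> n \<Longrightarrow>
             \<alpha> * (a * (n - a)) + \<alpha> * (b * (n - b)) + \<gamma> * (a * (n - b)) \<le> M"
  shows "mac {..<2*n} (two_cliques n \<alpha> \<gamma>) \<le> M"
proof (rule mac_le)
  fix Z assume "Z \<subseteq> {..<2*n}"
  moreover have "card (Z \<inter> {..<n}) \<le> n"
    using card_mono[of "{..<n}" "Z \<inter> {..<n}"] by auto
  ultimately show "cut_weight {..<2*n} (two_cliques n \<alpha> \<gamma>) Z \<le> M"
    using assms card_Int_upper_half_le[of Z n] by (simp add: cut_weight_two_cliques)
qed simp

lemma cut_weight_two_cliques_half: "cut_weight {..<2*n} (two_cliques n \<alpha> \<gamma>) {..<n} = \<gamma> * real n ^ 2"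
proof -
  have "{..<n} \<inter> {n..<2*n} = {}" by auto
  then show ?thesis by (simp add: cut_weight_two_cliques power2_eq_square)
qed

lemma cut_form_le_low:
  fixes a b n t :: real
  assumes "0 \<le> t" "t < 1/2"
  shows "(1 - t) * (a * (n - a) + b * (n - b)) + 2 * t * (a * (n - b))
           \<le> 2 * n^2 * ((1 - t)^2 / (4 * (1 - 2*t)))"
proof -
  define d where "d = 1 - 2*t"
  have "d > 0" using assms by (simp add: d_def)
  define U where "U = 2*d*a - (1 - t)*n"
  define V where "V = 2*d*b - 2*d*n + (1 - t)*n"
  let ?F = "(1 - t) * (a * (n - a) + b * (n - b)) + 2 * t * (a * (n - b))"
  text \<open>A sum-of-squares certificate; \<open>U = V = 0\<close> is the optimal cut.\<close>
  have "2 * (d * (1 - t)^2 * n^2 - 2 * d^2 * ?F) = t * (U + V)^2 + d * (U^2 + V^2)"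
    unfolding U_def V_def d_def by (simp add: algebra_simps power2_eq_square)
  also have "\<dots> \<ge> 0" using \<open>d > 0\<close> assms by simp
  finally have "?F \<le> d * (1 - t)^2 * n^2 / (2 * d^2)"
    using \<open>d > 0\<close> by (simp add: field_simps power2_eq_square)
  also have "\<dots> = 2 * n^2 * ((1 - t)^2 / (4 * d))"
    using \<open>d > 0\<close> by (simp add: field_simps power2_eq_square)
  finally show ?thesis by (simp add: d_def)
qed

lemma cut_form_le_high:
  fixes a b n \<beta> :: real
  assumes "0 \<le> a" "a \<le> n" "0 \<le> b" "b \<le> n" "0 \<le> \<beta>" "\<beta> \<le> 1"
  shows "\<beta> * (a * (n - a)) + \<beta> * (b * (n - b)) + a * (n - b) \<le> n^2"
proof -
  have "\<beta> * (a * (n - a)) \<le> a * (n - a)" "\<beta> * (b * (n - b)) \<le> b * (n - b)"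
    using assms by (simp_all add: mult_left_le_one_le)
  moreover have "n^2 - (a * (n - a) + b * (n - b) + a * (n - b)) = ((n - a) - b/2)^2 + 3 * b^2 / 4"
    by (simp add: algebra_simps power2_eq_square)
  moreover have "((n - a) - b/2)^2 + 3 * b^2 / 4 \<ge> 0" by simp
  ultimately show ?thesis by linarith
qed

lemma lfun_le_one_third:
  assumes "\<theta> \<le> 1/3"
  shows "lfun \<theta> = (1 - \<theta>)^2 / (4 * (1 - 2*\<theta>))"
proof (cases "\<theta> = 1/3")
  case False
  then have "1 - 2*\<theta> > 0" using assms by simp
  with False assms show ?thesis
    unfolding lfun_def by (simp add: field_simps power2_eq_square)
next
  case True
  then show ?thesis unfolding lfun_def True by (simp add: power2_eq_square)
qed

lemma two_cliques_low_theta: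
  fixes \<theta> :: real
  assumes "0 \<le> \<theta>" "\<theta> \<le> 1/3" "n \<ge> 2"
  defines "w \<equiv> two_cliques n (1 - \<theta>) (2 * \<theta> * (real n - 1) / real n)"
  shows "weighted_digraph {..<2*n} w"
    and "total_weight {..<2*n} w = 2 * real n * (real n - 1)"
    and "theta {..<2*n} w = \<theta>"
    and "mac {..<2*n} w \<le> 2 * real n ^ 2 * lfun \<theta>"
proof -
  define \<gamma> where "\<gamma> = 2 * \<theta> * (real n - 1) / real n"
  have w: "w = two_cliques n (1 - \<theta>) \<gamma>" by (simp add: w_def \<gamma>_def)
  have "real n \<ge> 2" using assms by simp
  then have "\<gamma> \<ge> 0" using assms by (simp add: \<gamma>_def)
  have \<gamma>_n2: "\<gamma> * real n ^ 2 = 2 * \<theta> * (real n - 1) * real n"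
    using \<open>real n \<ge> 2\<close> by (simp add: \<gamma>_def power2_eq_square)
  have "\<gamma> = 2 * \<theta> * ((real n - 1) / real n)" by (simp add: \<gamma>_def)
  also have "\<dots> \<le> 2 * \<theta>" using assms by (intro mult_left_le) auto
  finally have "\<gamma> \<le> 2 * \<theta>" .
  show "weighted_digraph {..<2*n} w"
    unfolding w using assms \<open>\<gamma> \<ge> 0\<close> by (intro weighted_digraph_two_cliques) auto
  show total: "total_weight {..<2*n} w = 2 * real n * (real n - 1)"
    unfolding w total_weight_two_cliques \<gamma>_n2 by (simp add: algebra_simps)
  show "theta {..<2*n} w = \<theta>"
    unfolding theta_def total unfolding w rplus_two_cliques[OF \<open>\<gamma> \<ge> 0\<close>] \<gamma>_n2
    using \<open>real n \<ge> 2\<close> by simp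
  show "mac {..<2*n} w \<le> 2 * real n ^ 2 * lfun \<theta>"
    unfolding w
  proof (rule mac_two_cliques_le)
    fix a b :: real assume "0 \<le> a" "0 \<le> b" "b \<le> n"
    then have "\<gamma> * (a * (n - b)) \<le> 2 * \<theta> * (a * (n - b))"
      using \<open>\<gamma> \<le> 2 * \<theta>\<close> by (intro mult_right_mono) auto
    then show "(1 - \<theta>) * (a * (n - a)) + (1 - \<theta>) * (b * (n - b)) + \<gamma> * (a * (n - b))
                 \<le> 2 * real n ^ 2 * lfun \<theta>"
      using cut_form_le_low[of \<theta> a n b] assms by (simp add: lfun_le_one_third algebra_simps)
  qed
qed

lemma two_cliques_high_theta:
  fixes \<theta> :: real
  assumes "1/3 < \<theta>" "\<theta> \<le> 1" "n \<ge> 2" "2 * \<theta> < real n * (3 * \<theta> - 1)"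
  defines "w \<equiv> two_cliques n (real n * (1 - \<theta>) / (2 * \<theta> * (real n - 1))) 1"
  shows "weighted_digraph {..<2*n} w"
    and "total_weight {..<2*n} w = real n ^ 2 / \<theta>"
    and "theta {..<2*n} w = \<theta>"
    and "mac {..<2*n} w = real n ^ 2"
proof -
  define \<alpha> where "\<alpha> = real n * (1 - \<theta>) / (2 * \<theta> * (real n - 1))"
  have w: "w = two_cliques n \<alpha> 1" by (simp add: w_def \<alpha>_def)
  have "real n \<ge> 2" using assms by simp
  then have "\<alpha> \<ge> 0" "\<alpha> \<le> 1" and \<alpha>_n: "2 * real n * \<alpha> * (real n - 1) = real n ^ 2 * (1 - \<theta>) / \<theta>"
    using assms by (auto simp: \<alpha>_def field_simps power2_eq_square)
  show "weighted_digraph {..<2*n} w"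
    unfolding w using \<open>\<alpha> \<ge> 0\<close> by (intro weighted_digraph_two_cliques) auto
  show total: "total_weight {..<2*n} w = real n ^ 2 / \<theta>"
    unfolding w total_weight_two_cliques \<alpha>_n
    using assms by (simp add: field_simps)
  show "theta {..<2*n} w = \<theta>"
    unfolding theta_def total unfolding w rplus_two_cliques[OF zero_le_one]
    using \<open>real n \<ge> 2\<close> assms by simp
  have "mac {..<2*n} w \<le> real n ^ 2"
    unfolding w
    by (rule mac_two_cliques_le) (use cut_form_le_high \<open>\<alpha> \<ge> 0\<close> \<open>\<alpha> \<le> 1\<close> in simp)
  moreover have "real n ^ 2 \<le> mac {..<2*n} w"
    using cut_weight_le_mac[of "{..<2*n}" "{..<n}" w] by (simp add: w cut_weight_two_cliques_half)
  ultimately show "mac {..<2*n} w = real n ^ 2" by simp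
qed

lemma exists_digraph_low_theta:
  fixes \<theta> \<epsilon> :: real
  assumes "0 \<le> \<theta>" "\<theta> \<le> 1/3" "\<epsilon> > 0"
  shows "\<exists>V w. weighted_digraph V w \<and> total_weight V w > 0 \<and> theta V w = \<theta> \<and>
                mac V w < (1 + \<epsilon>) * lfun \<theta> * total_weight V w"
proof -
  obtain n :: nat where n: "real n > 2 + 1 / \<epsilon>" using reals_Archimedean2 by blast
  moreover have "1 / \<epsilon> > 0" using assms by simp
  ultimately have "real n > 2" by linarith
  then have "n \<ge> 2" by simp
  define w where "w = two_cliques n (1 - \<theta>) (2 * \<theta> * (real n - 1) / real n)"
  note D = two_cliques_low_theta[OF assms(1,2) \<open>n \<ge> 2\<close>, folded w_def]
  have "lfun \<theta> > 0" using assms by (simp add: lfun_le_one_third)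
  have "\<epsilon> * real n > 1 + \<epsilon>" using n assms by (simp add: field_simps)
  then have "real n < (1 + \<epsilon>) * (real n - 1)" by (simp add: algebra_simps)
  then have "2 * real n ^ 2 * lfun \<theta> < (1 + \<epsilon>) * lfun \<theta> * (2 * real n * (real n - 1))"
    using \<open>lfun \<theta> > 0\<close> \<open>n \<ge> 2\<close> by (simp add: power2_eq_square)
  then have "mac {..<2*n} w < (1 + \<epsilon>) * lfun \<theta> * total_weight {..<2*n} w"
    using D(2,4) by simp
  moreover have "total_weight {..<2*n} w > 0" using D(2) \<open>n \<ge> 2\<close> by simp
  ultimately show ?thesis using D(1,3) by blast
qed

lemma exists_digraph_high_theta:
  fixes \<theta> :: real
  assumes "1/3 < \<theta>" "\<theta> \<le> 1"
  shows "\<exists>V w. weighted_digraph V w \<and> total_weight V w > 0 \<and> theta V w = \<theta> \<and>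
                mac V w = \<theta> * total_weight V w"
proof -
  obtain n :: nat where n: "real n > 2 + 2 * \<theta> / (3 * \<theta> - 1)" using reals_Archimedean2 by blast
  have "2 * \<theta> / (3 * \<theta> - 1) > 0" using assms by simp
  with n have "real n > 2" by linarith
  then have "n \<ge> 2" by simp
  from n have n_large: "2 * \<theta> < real n * (3 * \<theta> - 1)"
    using assms \<open>2 * \<theta> / (3 * \<theta> - 1) > 0\<close> by (simp add: field_simps)
  define w where "w = two_cliques n (real n * (1 - \<theta>) / (2 * \<theta> * (real n - 1))) 1"
  note D = two_cliques_high_theta[OF assms \<open>n \<ge> 2\<close> n_large, folded w_def]
  have "total_weight {..<2*n} w > 0" using D(2) \<open>n \<ge> 2\<close> assms by simp
  moreover have "mac {..<2*n} w = \<theta> * total_weight {..<2*n} w" using D(2,4) assms by simp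
  ultimately show ?thesis using D(1,3) by blast
qed

theorem mainTheorem8:
  fixes \<theta> :: real
  assumes "0 \<le> \<theta>" and "\<theta> \<le> 1"
  shows "(\<theta> \<le> 1/3 \<longrightarrow>
           (\<forall>\<epsilon>>0. \<exists>V w. weighted_digraph V w \<and> total_weight V w > 0 \<and>
                theta V w = \<theta> \<and> mac V w < (1 + \<epsilon>) * lfun \<theta> * total_weight V w))
       \<and> (1/3 < \<theta> \<longrightarrow>
           (\<exists>V w. weighted_digraph V w \<and> total_weight V w > 0 \<and>
                theta V w = \<theta> \<and> mac V w = \<theta> * total_weight V w))"
  using assms exists_digraph_low_theta exists_digraph_high_theta by simp

end
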